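(* Let $P$ be the uniform probability measure on $[0,1]$, $Q$ a probability measure on $[0,1]$ with unimodal density $r = dQ/dP$, maximiser $x^*$ and $r_{max} = \sup r<\infty$. Let $B_1, B_2,\dots$ be the bounds produced by AS* and $Z_n = P(B_n)$. Then for every $\gamma\in[0,1]$ and $n \ge 1$, $$\mathbb{P}(Z_n \ge w(\gamma)) \le \frac{1}{w(\gamma)}\left(\frac{3}{4}\right)^{n-1}.$$
   Context: Unimodal: $r$ non-decreasing on $[0,x^*]$, non-increasing on $[x^*,1]$, $r(x^* ) = r_{max}$. $S(\gamma) = \{x\in[0,1] : r(x)\ge\gamma r_{max}\}$ and $w(\gamma) = \inf\{\delta\in[0,1] : \exists z\in[0,1],\ S(\gamma)\subseteq[z,z+\delta]\}$. $\mathrm{TG}(\mu,\kappa)$ is the unit-scale Gumbel with location $\mu$ truncated to $(-\infty,\kappa]$ (density $\propto \exp(-(g-\mu)-e^{-(g-\mu)})$ on $g\le\kappa$). AS*: $B_1=[0,1]$, $G_0=+\infty$; for every $n\ge1$ draw $G_n\sim\mathrm{TG}(\log P(B_n),G_{n-1})$ and independently $X_n\sim P(\cdot\cap B_n)/P(B_n)$; set $L_n=\max_{k\le n}(\log r(X_k)+G_k)$, $U_n=\log r_{max}+G_n$, and $B_{n+1}=[\max(\{0\}\cup\{X_k:k\le n,X_k\le x^*\}),\ \min(\{1\}\cup\{X_k:k\le n,X_k\ge x^*\})]$. These sequences are defined for all $n$; the algorithm's number of steps is $T=\min\{n\ge1: L_n\ge U_n\}$. *)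

theory Defs
  imports "HOL-Probability.Probability"
begin

definition unifP :: "real measure" where
  "unifP = uniform_measure lborel {0..1}"

definition Slev :: "(real \<Rightarrow> real) \<Rightarrow> real \<Rightarrow> real \<Rightarrow> real set" where
  "Slev r rmax \<gamma> = {x \<in> {0..1}. r x \<ge> \<gamma> * rmax}"

definition wid :: "(real \<Rightarrow> real) \<Rightarrow> real \<Rightarrow> real \<Rightarrow> real" where
  "wid r rmax \<gamma> = Inf {\<delta> \<in> {0..1}. \<exists>z\<in>{0..1}. Slev r rmax \<gamma> \<subseteq> {z..z+\<delta>}}"

definition gumbel_dens :: "real \<Rightarrow> real \<Rightarrow> real" where
  "gumbel_dens \<mu> g = exp (- (g - \<mu>) - exp (- (g - \<mu>)))"

definition TG :: "real \<Rightarrow> ereal \<Rightarrow> real measure" where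
  "TG \<mu> \<kappa> = density lborel (\<lambda>g.
      ennreal (gumbel_dens \<mu> g) * indicator {h. ereal h \<le> \<kappa>} g /
      (\<integral>\<^sup>+ h. ennreal (gumbel_dens \<mu> h) * indicator {h. ereal h \<le> \<kappa>} h \<partial>lborel))"

text \<open>X_n ~ P(. \<inter> B_n)/P(B_n), i.e. uniform on B_n=[a,b]
  (degenerate case a = b, a null event, handled by a point mass).\<close>
definition unifB :: "real \<Rightarrow> real \<Rightarrow> real measure" where
  "unifB a b = (if a < b then uniform_measure lborel {a..b} else return borel a)"

text \<open>One step of AS*: state (a, b, g) encodes B_n = [a,b] and G_{n-1} = g.
  Draw X_n and G_n independently, and produce (B_{n+1}, G_n).\<close>
definition AS_step :: "real \<Rightarrow> real \<times> real \<times> ereal \<Rightarrow> (real \<times> real \<times> ereal) measure" where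
  "AS_step xs s = (case s of (a, b, g) \<Rightarrow>
     distr (unifB a b \<Otimes>\<^sub>M TG (ln (measure unifP {a..b})) g) borel
       (\<lambda>(x, g'). (if x \<le> xs then max a x else a, if x \<ge> xs then min b x else b, ereal g')))"

text \<open>Law of (B_n, G_{n-1}) for n \<ge> 1 (index 0 is unused and set equal to index 1):
  B_1 = [0,1], G_0 = +\<infinity>.\<close>
fun AS_law :: "real \<Rightarrow> nat \<Rightarrow> (real \<times> real \<times> ereal) measure" where
  "AS_law xs 0 = return borel (0, 1, PInfty)"
| "AS_law xs (Suc 0) = return borel (0, 1, PInfty)"
| "AS_law xs (Suc (Suc n)) = AS_law xs (Suc n) \<bind> AS_step xs"

end

theory Submission
  imports Defs
begin

text \<open>
  Every bracket \<open>B\<^sub>n = [a, b]\<close> produced by AS* lies in \<open>[0, 1]\<close> and contains \<open>x\<^sup>*\<close>,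
  so \<open>Z\<^sub>n = b - a\<close>. Writing \<open>u = x\<^sup>* - a\<close> and \<open>v = b - x\<^sup>*\<close>, the uniform draw \<open>X\<close> cuts
  the bracket at \<open>X\<close> and keeps the side containing \<open>x\<^sup>*\<close>; the expected new length is
  \<open>((u + v)\<^sup>2/2 + u v) / (u + v) \<le> 3/4 (u + v)\<close>, because \<open>u v \<le> (u + v)\<^sup>2/4\<close>.
  The Gumbel variables do not influence the brackets. Hence \<open>E Z\<^sub>n \<le> (3/4)\<^sup>n\<^sup>-\<^sup>1\<close>,
  and Markov's inequality gives the claim. Nothing about \<open>r\<close> beyond \<open>x\<^sup>* \<in> [0, 1]\<close>
  is needed: the bound holds for every threshold in place of \<open>w(\<gamma>)\<close>.
\<close>

lemma borel_state_eq: "(borel :: (real \<times> real \<times> ereal) measure) = borel \<Otimes>\<^sub>M (borel \<Otimes>\<^sub>M borel)"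
  by (simp add: borel_prod)

lemma measure_unifP_Icc: "measure unifP {a..b} = max 0 (min b 1 - max a 0)"
proof -
  have "{a..b} \<inter> {0..1::real} = {max a 0..min b 1}" by auto
  then have "emeasure unifP {a..b} = emeasure lborel {max a 0..min b 1} / emeasure lborel {0..1::real}"
    unfolding unifP_def by (subst emeasure_uniform_measure) (auto simp: Int_commute)
  also have "\<dots> = ennreal (max 0 (min b 1 - max a 0))"
    by (cases "max a 0 \<le> min b 1") (auto simp: ennreal_neg divide_ennreal_def)
  finally show ?thesis
    by (intro measure_eq_emeasure_eq_ennreal) auto
qed

lemma sets_unifB [simp, measurable_cong]: "sets (unifB a b) = sets borel"
  by (simp add: unifB_def)

lemma prob_space_unifB: "prob_space (unifB a b)"
  by (auto simp: unifB_def intro!: prob_space_uniform_measure prob_space_return)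

lemma emeasure_unifB:
  assumes "A \<in> sets borel"
  shows "emeasure (unifB a b) A =
    (if a < b then (\<integral>\<^sup>+x. indicator A x * indicator {a..b} x \<partial>lborel) / ennreal (b - a)
     else indicator A a)"
proof -
  have "(\<integral>\<^sup>+x. indicator A x * indicator {a..b} x \<partial>lborel) = emeasure lborel (A \<inter> {a..b})"
    using assms by (simp flip: indicator_inter_arith)
  then show ?thesis
    using assms by (auto simp: unifB_def Int_commute)
qed

lemma measurable_unifB [measurable (raw)]:
  assumes [measurable]: "f \<in> M \<rightarrow>\<^sub>M borel" "g \<in> M \<rightarrow>\<^sub>M borel"
  shows "(\<lambda>x. unifB (f x) (g x)) \<in> M \<rightarrow>\<^sub>M subprob_algebra borel"
proof (rule measurable_subprob_algebra)
  fix x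
  show "subprob_space (unifB (f x) (g x))"
    by (rule prob_space_imp_subprob_space[OF prob_space_unifB])
  show "sets (unifB (f x) (g x)) = sets borel"
    by simp
next
  fix A :: "real set"
  assume A [measurable]: "A \<in> sets borel"
  show "(\<lambda>x. emeasure (unifB (f x) (g x)) A) \<in> borel_measurable M"
    unfolding emeasure_unifB[OF A] indicator_def atLeastAtMost_iff by measurable
qed

lemma measurable_density_kernel:
  assumes "sigma_finite_measure M"
    and F [measurable]: "case_prod F \<in> borel_measurable (N \<Otimes>\<^sub>M M)"
    and subprob: "\<And>x. x \<in> space N \<Longrightarrow> subprob_space (density M (F x))"
  shows "(\<lambda>x. density M (F x)) \<in> N \<rightarrow>\<^sub>M subprob_algebra M"
proof (rule measurable_subprob_algebra)
  interpret M: sigma_finite_measure M by fact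
  fix A
  assume [measurable]: "A \<in> sets M"
  have "(\<lambda>x. \<integral>\<^sup>+y. F x y * indicator A y \<partial>M) \<in> borel_measurable N"
    by measurable
  moreover have "emeasure (density M (F x)) A = (\<integral>\<^sup>+y. F x y * indicator A y \<partial>M)"
    if "x \<in> space N" for x
    using that by (intro emeasure_density) (auto intro: measurable_Pair2[OF F])
  ultimately show "(\<lambda>x. emeasure (density M (F x)) A) \<in> borel_measurable N"
    by (simp cong: measurable_cong)
qed (simp_all add: subprob)

lemma subprob_space_TG: "subprob_space (TG \<mu> \<kappa>)"
proof -
  let ?g = "\<lambda>h. ennreal (gumbel_dens \<mu> h) * indicator {h. ereal h \<le> \<kappa>} h"
  have [measurable]: "?g \<in> borel_measurable borel"
    unfolding gumbel_dens_def indicator_def by measurable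
  have "emeasure (TG \<mu> \<kappa>) (space (TG \<mu> \<kappa>)) = (\<integral>\<^sup>+h. ?g h / integral\<^sup>N lborel ?g \<partial>lborel)"
    unfolding TG_def by (subst emeasure_density) auto
  also have "\<dots> = integral\<^sup>N lborel ?g / integral\<^sup>N lborel ?g"
    by (rule nn_integral_divide) simp
  also have "\<dots> \<le> 1"
    by (cases "integral\<^sup>N lborel ?g = 0"; cases "integral\<^sup>N lborel ?g = \<top>")
       (auto simp: ennreal_top_divide top.not_eq_extremum)
  finally show ?thesis
    by (intro subprob_spaceI) (auto simp: TG_def)
qed

lemma measurable_TG [measurable (raw)]:
  assumes [measurable]: "f \<in> M \<rightarrow>\<^sub>M borel" "g \<in> M \<rightarrow>\<^sub>M borel"
  shows "(\<lambda>x. TG (f x) (g x)) \<in> M \<rightarrow>\<^sub>M subprob_algebra borel"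
proof -
  define G where "G x h = ennreal (gumbel_dens (f x) h) * indicator {h. ereal h \<le> g x} h" for x h
  have [measurable]: "case_prod G \<in> borel_measurable (M \<Otimes>\<^sub>M lborel)"
    unfolding G_def gumbel_dens_def indicator_def mem_Collect_eq by measurable
  have TG_eq: "TG (f x) (g x) = density lborel (\<lambda>h. G x h / integral\<^sup>N lborel (G x))" for x
    unfolding TG_def G_def ..
  have "(\<lambda>x. density lborel (\<lambda>h. G x h / integral\<^sup>N lborel (G x))) \<in> M \<rightarrow>\<^sub>M subprob_algebra lborel"
    by (rule measurable_density_kernel)
       (auto simp flip: TG_eq intro: subprob_space_TG lborel.sigma_finite_measure_axioms)
  then show ?thesis
    by (simp add: TG_eq cong: subprob_algebra_cong)
qed

lemma AS_step_eq:
  "AS_step xs s =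
    distr (unifB (fst s) (fst (snd s)) \<Otimes>\<^sub>M TG (ln (measure unifP {fst s..fst (snd s)})) (snd (snd s))) borel
      (\<lambda>(x, g'). (if x \<le> xs then max (fst s) x else fst s,
                   if x \<ge> xs then min (fst (snd s)) x else fst (snd s), ereal g'))"
proof -
  obtain a b g where s: "s = (a, b, g)"
    by (cases s)
  show ?thesis
    unfolding s AS_step_def prod.case fst_conv snd_conv ..
qed

lemma measurable_AS_step [measurable]: "AS_step xs \<in> borel \<rightarrow>\<^sub>M subprob_algebra borel"
proof -
  have "(\<lambda>s. unifB (fst s) (fst (snd s)) \<Otimes>\<^sub>M TG (ln (measure unifP {fst s..fst (snd s)})) (snd (snd s)))
      \<in> borel \<Otimes>\<^sub>M (borel \<Otimes>\<^sub>M borel) \<rightarrow>\<^sub>M subprob_algebra (borel \<Otimes>\<^sub>M borel)"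
    unfolding measure_unifP_Icc by (intro measurable_pair_measure) measurable
  moreover have "(\<lambda>(s, y). case y of (x, g') \<Rightarrow>
        (if x \<le> xs then max (fst s) x else fst s,
         if x \<ge> xs then min (fst (snd s)) x else fst (snd s), ereal g'))
      \<in> (borel \<Otimes>\<^sub>M (borel \<Otimes>\<^sub>M borel)) \<Otimes>\<^sub>M (borel \<Otimes>\<^sub>M borel) \<rightarrow>\<^sub>M borel \<Otimes>\<^sub>M (borel \<Otimes>\<^sub>M borel)"
    by measurable
  ultimately show ?thesis
    unfolding AS_step_eq[abs_def] borel_state_eq by (rule measurable_distr2[rotated])
qed

lemma sets_AS_law [measurable_cong]: "sets (AS_law xs n) = sets borel"
proof (induction xs n rule: AS_law.induct)
  case (3 xs n)
  have "AS_step xs \<in> AS_law xs (Suc n) \<rightarrow>\<^sub>M subprob_algebra borel"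
    using measurable_AS_step by (simp add: measurable_cong_sets[OF "3" refl])
  moreover have "space (AS_law xs (Suc n)) \<noteq> {}"
    using sets_eq_imp_space_eq[OF "3"] by simp
  ultimately show ?case
    by (simp add: sets_bind_measurable)
qed simp_all

lemma space_AS_law [simp]: "space (AS_law xs n) = UNIV"
  using sets_eq_imp_space_eq[OF sets_AS_law] by simp

definition brackets :: "real \<Rightarrow> real \<times> real \<times> ereal \<Rightarrow> bool" where
  "brackets xs s \<longleftrightarrow> 0 \<le> fst s \<and> fst s \<le> xs \<and> xs \<le> fst (snd s) \<and> fst (snd s) \<le> 1"

text \<open>
  The value \<open>\<top>\<close> off the invariant makes the one-step contraction hold at every state,
  so no argument about the support of \<open>AS_law\<close> is needed.
\<close>
definition bracket_width :: "real \<Rightarrow> real \<times> real \<times> ereal \<Rightarrow> ennreal" where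
  "bracket_width xs s = (if brackets xs s then ennreal (fst (snd s) - fst s) else \<top>)"

lemma borel_measurable_bracket_width [measurable]: "bracket_width xs \<in> borel_measurable borel"
  unfolding borel_state_eq bracket_width_def brackets_def by measurable

definition cut_width :: "real \<Rightarrow> real \<Rightarrow> real \<Rightarrow> real \<Rightarrow> real" where
  "cut_width xs a b x = (if xs \<le> x then min b x else b) - (if x \<le> xs then max a x else a)"

lemma borel_measurable_cut_width [measurable]: "cut_width xs a b \<in> borel_measurable borel"
  unfolding cut_width_def by measurable

lemma bracket_width_cut:
  assumes "brackets xs (a, b, g)"
  shows "bracket_width xs (if x \<le> xs then max a x else a, if x \<ge> xs then min b x else b, g') =
    ennreal (cut_width xs a b x)"
  using assms by (auto simp: bracket_width_def brackets_def cut_width_def)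

lemma nn_integral_lborel_cut_width_le:
  assumes "a \<le> xs" "xs \<le> b"
  shows "(\<integral>\<^sup>+x. ennreal (cut_width xs a b x) * indicator {a..b} x \<partial>lborel)
    \<le> ennreal ((b - a)\<^sup>2 / 2 + (xs - a) * (b - xs))"
proof -
  have left: "(\<integral>\<^sup>+x. ennreal (b - x) * indicator {a..xs} x \<partial>lborel) =
      ennreal ((xs - a) * (b - xs) + (xs - a)\<^sup>2 / 2)"
  proof -
    have "(\<integral>\<^sup>+x. ennreal (b - x) * indicator {a..xs} x \<partial>lborel) = ennreal ((b * xs - xs\<^sup>2 / 2) - (b * a - a\<^sup>2 / 2))"
      by (rule nn_integral_FTC_Icc) (use assms in \<open>auto intro!: derivative_eq_intros\<close>)
    also have "(b * xs - xs\<^sup>2 / 2) - (b * a - a\<^sup>2 / 2) = (xs - a) * (b - xs) + (xs - a)\<^sup>2 / 2"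
      by (simp add: power2_eq_square field_simps)
    finally show ?thesis .
  qed
  have right: "(\<integral>\<^sup>+x. ennreal (x - a) * indicator {xs..b} x \<partial>lborel) =
      ennreal ((b - xs) * (xs - a) + (b - xs)\<^sup>2 / 2)"
  proof -
    have "(\<integral>\<^sup>+x. ennreal (x - a) * indicator {xs..b} x \<partial>lborel) = ennreal ((b\<^sup>2 / 2 - a * b) - (xs\<^sup>2 / 2 - a * xs))"
      by (rule nn_integral_FTC_Icc) (use assms in \<open>auto intro!: derivative_eq_intros simp: power2_eq_square\<close>)
    also have "(b\<^sup>2 / 2 - a * b) - (xs\<^sup>2 / 2 - a * xs) = (b - xs) * (xs - a) + (b - xs)\<^sup>2 / 2"
      by (simp add: power2_eq_square field_simps)
    finally show ?thesis .
  qed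
  have "(\<integral>\<^sup>+x. ennreal (cut_width xs a b x) * indicator {a..b} x \<partial>lborel)
      \<le> (\<integral>\<^sup>+x. ennreal (b - x) * indicator {a..xs} x + ennreal (x - a) * indicator {xs..b} x \<partial>lborel)"
    using assms by (intro nn_integral_mono) (auto simp: cut_width_def split: split_indicator)
  also have "\<dots> = ennreal ((xs - a) * (b - xs) + (xs - a)\<^sup>2 / 2) + ennreal ((b - xs) * (xs - a) + (b - xs)\<^sup>2 / 2)"
    by (simp add: nn_integral_add left right)
  also have "\<dots> = ennreal ((xs - a) * (b - xs) + (xs - a)\<^sup>2 / 2 + ((b - xs) * (xs - a) + (b - xs)\<^sup>2 / 2))"
    using assms by (intro ennreal_plus[symmetric]) auto
  also have "(xs - a) * (b - xs) + (xs - a)\<^sup>2 / 2 + ((b - xs) * (xs - a) + (b - xs)\<^sup>2 / 2)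
      = (b - a)\<^sup>2 / 2 + (xs - a) * (b - xs)"
    by (simp add: power2_eq_square field_simps)
  finally show ?thesis .
qed

lemma nn_integral_unifB_cut_width_le:
  assumes "a \<le> xs" "xs \<le> b"
  shows "(\<integral>\<^sup>+x. ennreal (cut_width xs a b x) \<partial>unifB a b) \<le> ennreal (3/4 * (b - a))"
proof (cases "a < b")
  case True
  have "(\<integral>\<^sup>+x. ennreal (cut_width xs a b x) \<partial>unifB a b)
      = (\<integral>\<^sup>+x. ennreal (cut_width xs a b x) * indicator {a..b} x \<partial>lborel) / ennreal (b - a)"
    using True by (simp add: unifB_def nn_integral_uniform_measure)
  also have "\<dots> \<le> ennreal ((b - a)\<^sup>2 / 2 + (xs - a) * (b - xs)) / ennreal (b - a)"
    using assms by (intro divide_right_mono_ennreal nn_integral_lborel_cut_width_le)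
  also have "\<dots> \<le> ennreal (3/4 * (b - a)\<^sup>2) / ennreal (b - a)"
  proof (intro divide_right_mono_ennreal ennreal_leI)
    have "4 * ((xs - a) * (b - xs)) \<le> (b - a)\<^sup>2"
      using sum_squares_ge_zero[of "(xs - a) - (b - xs)" 0] by (simp add: power2_eq_square algebra_simps)
    then show "(b - a)\<^sup>2 / 2 + (xs - a) * (b - xs) \<le> 3/4 * (b - a)\<^sup>2"
      by simp
  qed
  also have "\<dots> = ennreal (3/4 * (b - a)\<^sup>2 / (b - a))"
    using True by (intro divide_ennreal) auto
  also have "3/4 * (b - a)\<^sup>2 / (b - a) = 3/4 * (b - a)"
    using True by (simp add: power2_eq_square field_simps)
  finally show ?thesis .
next
  case False
  then show ?thesis
    using assms by (simp add: unifB_def nn_integral_return cut_width_def)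
qed

lemma nn_integral_fst_subprob_le:
  fixes f :: "'a \<Rightarrow> ennreal"
  assumes "subprob_space T" and [measurable]: "f \<in> borel_measurable M"
  shows "(\<integral>\<^sup>+z. f (fst z) \<partial>(M \<Otimes>\<^sub>M T)) \<le> (\<integral>\<^sup>+x. f x \<partial>M)"
proof -
  interpret T: subprob_space T by fact
  have "(\<integral>\<^sup>+z. f (fst z) \<partial>(M \<Otimes>\<^sub>M T)) = (\<integral>\<^sup>+x. f x * emeasure T (space T) \<partial>M)"
    by (simp flip: T.nn_integral_fst)
  also have "\<dots> \<le> (\<integral>\<^sup>+x. f x \<partial>M)"
    by (intro nn_integral_mono) (simp add: T.emeasure_space_le_1 mult_left_le)
  finally show ?thesis .
qed

lemma nn_integral_AS_step_bracket_width_le: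
  "(\<integral>\<^sup>+y. bracket_width xs y \<partial>AS_step xs s) \<le> ennreal (3/4) * bracket_width xs s"
proof (cases "brackets xs s")
  case False
  then show ?thesis
    by (simp add: bracket_width_def ennreal_mult_top)
next
  case True
  obtain a b g where s: "s = (a, b, g)"
    by (cases s)
  define U where "U = unifB a b"
  define T where "T = TG (ln (measure unifP {a..b})) g"
  define F where "F = (\<lambda>(x, g'). (if x \<le> xs then max a x else a, if x \<ge> xs then min b x else b, ereal g'))"
  have sets_UT: "sets (U \<Otimes>\<^sub>M T) = sets (borel \<Otimes>\<^sub>M borel)"
    by (rule sets_pair_measure_cong) (simp_all add: U_def T_def TG_def)
  have "F \<in> borel \<Otimes>\<^sub>M borel \<rightarrow>\<^sub>M borel \<Otimes>\<^sub>M (borel \<Otimes>\<^sub>M borel)"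
    unfolding F_def by measurable
  then have F: "F \<in> U \<Otimes>\<^sub>M T \<rightarrow>\<^sub>M borel"
    by (simp add: measurable_cong_sets[OF sets_UT refl] borel_state_eq)
  have "AS_step xs s = distr (U \<Otimes>\<^sub>M T) borel F"
    unfolding s AS_step_def U_def T_def F_def by simp
  then have "(\<integral>\<^sup>+y. bracket_width xs y \<partial>AS_step xs s) = (\<integral>\<^sup>+z. bracket_width xs (F z) \<partial>(U \<Otimes>\<^sub>M T))"
    using F by (simp add: nn_integral_distr)
  also have "\<dots> = (\<integral>\<^sup>+z. ennreal (cut_width xs a b (fst z)) \<partial>(U \<Otimes>\<^sub>M T))"
    using True by (intro nn_integral_cong) (auto simp: s F_def bracket_width_cut)
  also have "\<dots> \<le> (\<integral>\<^sup>+x. ennreal (cut_width xs a b x) \<partial>U)"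
    by (rule nn_integral_fst_subprob_le) (simp_all add: T_def subprob_space_TG U_def)
  also have "\<dots> \<le> ennreal (3/4 * (b - a))"
    using True unfolding U_def s brackets_def by (intro nn_integral_unifB_cut_width_le) auto
  also have "\<dots> = ennreal (3/4) * ennreal (b - a)"
    using True by (intro ennreal_mult) (auto simp: s brackets_def)
  also have "\<dots> = ennreal (3/4) * bracket_width xs s"
    using True by (simp add: s bracket_width_def brackets_def)
  finally show ?thesis .
qed

lemma nn_integral_bind_le_mult:
  fixes f :: "'a \<Rightarrow> ennreal"
  assumes K: "K \<in> M \<rightarrow>\<^sub>M subprob_algebra N"
    and [measurable]: "f \<in> borel_measurable N" "f \<in> borel_measurable M"
    and contraction: "\<And>x. x \<in> space M \<Longrightarrow> (\<integral>\<^sup>+y. f y \<partial>K x) \<le> c * f x"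
  shows "(\<integral>\<^sup>+y. f y \<partial>(M \<bind> K)) \<le> c * (\<integral>\<^sup>+x. f x \<partial>M)"
proof -
  have "(\<integral>\<^sup>+y. f y \<partial>(M \<bind> K)) = (\<integral>\<^sup>+x. \<integral>\<^sup>+y. f y \<partial>K x \<partial>M)"
    by (rule nn_integral_bind[OF _ K]) measurable
  also have "\<dots> \<le> (\<integral>\<^sup>+x. c * f x \<partial>M)"
    by (intro nn_integral_mono contraction)
  also have "\<dots> = c * (\<integral>\<^sup>+x. f x \<partial>M)"
    by (rule nn_integral_cmult) measurable
  finally show ?thesis .
qed

lemma nn_integral_AS_law_bracket_width_le:
  assumes "xs \<in> {0..1}"
  shows "(\<integral>\<^sup>+s. bracket_width xs s \<partial>AS_law xs (Suc m)) \<le> ennreal ((3/4) ^ m)"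
proof (induction m)
  case 0
  have "(\<integral>\<^sup>+s. bracket_width xs s \<partial>return borel (0, 1, \<infinity>)) = bracket_width xs (0, 1, \<infinity>)"
    by (rule nn_integral_return) simp_all
  also have "\<dots> = 1"
    using assms by (simp add: bracket_width_def brackets_def)
  finally show ?case
    by simp
next
  case (Suc m)
  have "(\<integral>\<^sup>+s. bracket_width xs s \<partial>AS_law xs (Suc (Suc m)))
      \<le> ennreal (3/4) * (\<integral>\<^sup>+s. bracket_width xs s \<partial>AS_law xs (Suc m))"
    unfolding AS_law.simps
    by (rule nn_integral_bind_le_mult) (measurable, rule nn_integral_AS_step_bracket_width_le)
  also have "\<dots> \<le> ennreal (3/4) * ennreal ((3/4) ^ m)"
    by (intro mult_left_mono Suc) simp
  also have "\<dots> = ennreal ((3/4) ^ Suc m)"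
    by (simp flip: ennreal_mult)
  finally show ?case .
qed

theorem mainTheorem4:
  fixes r :: "real \<Rightarrow> real" and Q :: "real measure"
    and xs rmax \<gamma> :: real and n :: nat
  assumes r_meas: "r \<in> borel_measurable borel"
    and r_nonneg: "\<forall>x\<in>{0..1}. 0 \<le> r x"
    and Q_def: "Q = density unifP (\<lambda>x. ennreal (r x))"
    and Q_prob: "prob_space Q"
    and xs_in: "xs \<in> {0..1}"
    and incr: "\<forall>x y. 0 \<le> x \<longrightarrow> x \<le> y \<longrightarrow> y \<le> xs \<longrightarrow> r x \<le> r y"
    and decr: "\<forall>x y. xs \<le> x \<longrightarrow> x \<le> y \<longrightarrow> y \<le> 1 \<longrightarrow> r y \<le> r x"
    and r_bdd: "bdd_above (r ` {0..1})"
    and rmax_def: "rmax = (SUP x\<in>{0..1}. r x)"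
    and r_xs: "r xs = rmax"
    and \<gamma>: "\<gamma> \<in> {0..1}"
    and n: "n \<ge> 1"
  shows "emeasure (AS_law xs n)
           {s. wid r rmax \<gamma> \<le> measure unifP {fst s..fst (snd s)}}
         \<le> ennreal ((3/4) ^ (n - 1)) / ennreal (wid r rmax \<gamma>)"
proof (cases "wid r rmax \<gamma> > 0")
  case False
  then have "ennreal (wid r rmax \<gamma>) = 0"
    by (simp add: ennreal_eq_0_iff)
  then show ?thesis
    by (simp add: divide_ennreal_def ennreal_mult_top)
next
  case True
  define w where "w = wid r rmax \<gamma>"
  let ?M = "AS_law xs n"
  have "{s. w \<le> measure unifP {fst s..fst (snd s)}} \<subseteq> {s \<in> space ?M. 1 \<le> ennreal (1 / w) * bracket_width xs s}"
    using True by (auto simp: w_def bracket_width_def brackets_def measure_unifP_Icc ennreal_mult_top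
        simp flip: ennreal_mult intro!: ennreal_leI)
  then have "emeasure ?M {s. w \<le> measure unifP {fst s..fst (snd s)}}
      \<le> emeasure ?M {s \<in> space ?M. 1 \<le> ennreal (1 / w) * bracket_width xs s}"
    by (rule emeasure_mono) measurable
  also have "\<dots> \<le> ennreal (1 / w) * (\<integral>\<^sup>+s. bracket_width xs s * indicator (space ?M) s \<partial>?M)"
    by (rule nn_integral_Markov_inequality) measurable
  also have "\<dots> \<le> ennreal (1 / w) * ennreal ((3/4) ^ (n - 1))"
    using nn_integral_AS_law_bracket_width_le[OF xs_in, of "n - 1"] n
    by (intro mult_left_mono) (simp_all add: Suc_diff_le)
  also have "\<dots> = ennreal ((3/4) ^ (n - 1)) / ennreal w"
    using True by (simp add: w_def divide_ennreal flip: ennreal_mult)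
  finally show ?thesis
    unfolding w_def .
qed

end
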